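(* Let $N\ge2$, $M\ge1$, $q_1,\dots,q_N>0$, and let each $J_k:\mathbb{R}^M\to\mathbb{R}$ be convex and differentiable with $\sum_{k=1}^Nq_kJ_k$ strongly convex, with unique minimizer $w^\star$. Let $A$ be primitive, left-stochastic and balanced with Perron vector $p$, and let $\mu_1,\dots,\mu_N>0$ satisfy $q=\beta\,\mathrm{diag}\{\mu_1,\dots,\mu_N\}p$ for some $\beta>0$. If block vectors $\mathcal{W}^\star=\mathrm{col}\{w_1^\star,\dots,w_N^\star\}\in\mathbb{R}^{NM}$ and $\mathcal{Y}^\star\in\mathbb{R}^{NM}$ exist that satisfy $$\bar{\mathcal{A}}^{\mathsf T}\mathcal{M}\nabla\mathcal{J}^o(\mathcal{W}^\star)+\mathcal{P}^{-1}\mathcal{V}\mathcal{Y}^\star=0,\qquad \mathcal{V}\mathcal{W}^\star=0,$$ then $w_1^\star=w_2^\star=\cdots=w_N^\star=w^\star$.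
   Context: $A=[a_{\ell k}]\in\mathbb{R}^{N\times N}$ is nonnegative, left-stochastic ($A^{\mathsf T}\mathbf{1}_N=\mathbf{1}_N$) and primitive, with Perron vector $p$: $Ap=p$, $\mathbf{1}_N^{\mathsf T}p=1$, $p\succ0$; $P=\mathrm{diag}(p)$, and balanced means $PA^{\mathsf T}=AP$. $q=(q_1,\dots,q_N)^{\mathsf T}$. $\bar A=(I_N+A)/2$. The symmetric positive semidefinite matrix $(P-AP)/2$ has eigendecomposition $U\Sigma U^{\mathsf T}$ and $V=U\Sigma^{1/2}U^{\mathsf T}$. $\bar{\mathcal{A}}=\bar A\otimes I_M$, $\mathcal{P}=P\otimes I_M$, $\mathcal{V}=V\otimes I_M$, $\mathcal{M}=\mathrm{diag}\{\mu_1I_M,\dots,\mu_NI_M\}$, and $\nabla\mathcal{J}^o(\mathcal{W})=\mathrm{col}\{\nabla J_1(w_1),\dots,\nabla J_N(w_N)\}$. *)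

theory Defs
  imports "HOL-Analysis.Analysis"
begin

definition mat_pow :: "real^'n^'n \<Rightarrow> nat \<Rightarrow> real^'n^'n" where
  "mat_pow A k = ((\<lambda>X. A ** X) ^^ k) (mat 1)"

definition primitive_matrix :: "real^'n^'n \<Rightarrow> bool" where
  "primitive_matrix A \<longleftrightarrow> (\<forall>i j. A$i$j \<ge> 0) \<and> (\<exists>k. \<forall>i j. mat_pow A k $i$j > 0)"

definition left_stochastic :: "real^'n^'n \<Rightarrow> bool" where
  "left_stochastic A \<longleftrightarrow> (\<forall>i j. A$i$j \<ge> 0) \<and> transpose A *v (\<chi> i. 1) = (\<chi> i. 1)"

definition diag_mat :: "real^'n \<Rightarrow> real^'n^'n" where
  "diag_mat d = (\<chi> i j. if i = j then d$i else 0)"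

definition strongly_convex_on :: "'a::real_normed_vector set \<Rightarrow> ('a \<Rightarrow> real) \<Rightarrow> bool" where
  "strongly_convex_on S f \<longleftrightarrow> (\<exists>c>0. convex_on S (\<lambda>x. f x - c / 2 * (norm x)^2))"

text \<open>Action of the Kronecker product B \<otimes> I_M on a block vector col{x_1,...,x_N},
  block vectors being represented as functions from the node index to R^M.\<close>
definition kron_I :: "real^'n^'n \<Rightarrow> ('n \<Rightarrow> real^'m) \<Rightarrow> ('n \<Rightarrow> real^'m)" where
  "kron_I B X = (\<lambda>l. \<Sum>k\<in>UNIV. B$l$k *\<^sub>R X k)"

end

theory Submission imports Defs begin

text \<open>As \<open>V\<close> is symmetric with \<open>V\<^sup>2 = (P - A P)/2\<close>, the condition \<open>V W = 0\<close> gives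
  \<open>(P - A P) W = 0\<close>, which by balancedness says that each coordinate slice of \<open>W\<close> is a fixed
  vector of the stochastic primitive matrix \<open>A\<^sup>T\<close>, hence constant: all \<open>w\<^sub>k\<close> equal some \<open>c\<close>.
  Pairing the first condition with \<open>p\<close> kills the \<open>V\<close>-term (since \<open>V 1 = 0\<close>) and, as
  \<open>(I + A) p = 2 p\<close>, leaves \<open>\<Sum>\<^sub>k \<mu>\<^sub>k p\<^sub>k \<nabla>J\<^sub>k(c) = 0\<close>. So \<open>c\<close> is a stationary point of the convex
  function \<open>\<Sum>\<^sub>k q\<^sub>k J\<^sub>k\<close>, hence a minimiser, hence \<open>w\<^sup>\<star>\<close> by uniqueness.\<close>

lemma kron_I_component: "kron_I B X l $ r = (B *v (\<chi> k. X k $ r)) $ l"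
  by (simp add: kron_I_def matrix_vector_mult_def sum_component)

lemma convex_on_ge_tangent:
  fixes f :: "'a::real_normed_vector \<Rightarrow> real"
  assumes cv: "convex_on UNIV f" and der: "(f has_derivative D) (at c)"
  shows "f c + D (w - c) \<le> f w"
proof -
  define d where "d = w - c"
  define g where "g t = f (c + t *\<^sub>R d)" for t :: real
  have "convex_on UNIV g"
  proof (rule convex_onI)
    fix t x y :: real assume t: "0 < t" "t < 1"
    have "c + ((1 - t) *\<^sub>R x + t *\<^sub>R y) *\<^sub>R d = (1 - t) *\<^sub>R (c + x *\<^sub>R d) + t *\<^sub>R (c + y *\<^sub>R d)"
      by (simp add: algebra_simps)
    then show "g ((1 - t) *\<^sub>R x + t *\<^sub>R y) \<le> (1 - t) * g x + t * g y"
      unfolding g_def using convex_onD[OF cv, of t] t by simp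
  qed simp
  moreover have "(g has_field_derivative D d) (at 0)"
  proof -
    have line: "((\<lambda>t. c + t *\<^sub>R d) has_derivative (\<lambda>t. t *\<^sub>R d)) (at (0::real))"
      by (auto intro!: derivative_eq_intros)
    have "(f has_derivative D) (at (c + (0::real) *\<^sub>R d))" using der by simp
    then have "(g has_derivative (\<lambda>t. D (t *\<^sub>R d))) (at 0)"
      unfolding g_def using has_derivative_compose[OF line] by simp
    moreover have "(\<lambda>t. D (t *\<^sub>R d)) = (*) (D d)"
      using linear_scale[OF has_derivative_linear[OF der]] by (auto simp: mult.commute)
    ultimately show ?thesis by (simp add: has_field_derivative_def)
  qed
  ultimately have "D d * (1 - 0) \<le> g 1 - g 0"
    by (intro convex_on_imp_above_tangent[where A=UNIV]) auto
  then show ?thesis by (simp add: g_def d_def)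
qed

lemma convex_sum_stationary_imp_minimum:
  fixes f :: "'i \<Rightarrow> 'a::real_inner \<Rightarrow> real"
  assumes "finite I"
    and nonneg: "\<And>k. k \<in> I \<Longrightarrow> a k \<ge> 0"
    and convex: "\<And>k. k \<in> I \<Longrightarrow> convex_on UNIV (f k)"
    and grad: "\<And>k. k \<in> I \<Longrightarrow> (f k has_derivative (\<lambda>h. g k \<bullet> h)) (at x)"
    and stationary: "(\<Sum>k\<in>I. a k *\<^sub>R g k) = 0"
  shows "(\<Sum>k\<in>I. a k * f k x) \<le> (\<Sum>k\<in>I. a k * f k v)"
proof -
  have "(\<Sum>k\<in>I. a k * f k x) = (\<Sum>k\<in>I. a k * f k x) + (\<Sum>k\<in>I. a k *\<^sub>R g k) \<bullet> (v - x)"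
    using stationary by simp
  also have "\<dots> = (\<Sum>k\<in>I. a k * (f k x + g k \<bullet> (v - x)))"
    by (simp add: inner_sum_left sum.distrib distrib_left)
  also have "\<dots> \<le> (\<Sum>k\<in>I. a k * f k v)"
    using convex_on_ge_tangent[OF convex grad] nonneg by (intro sum_mono mult_left_mono) auto
  finally show ?thesis .
qed

lemma diag_mat_mult_vector: "diag_mat d *v z = (\<chi> i. d$i * z$i)"
  by (simp add: diag_mat_def matrix_vector_mult_def vec_eq_iff
      if_distrib[of "\<lambda>a. a * _"] cong: if_cong)

lemma sqrt_diag_mul_self:
  fixes \<Sigma> :: "real^'n^'n"
  assumes "\<forall>i j. i \<noteq> j \<longrightarrow> \<Sigma>$i$j = 0" and "\<forall>i. \<Sigma>$i$i \<ge> 0"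
  defines "S \<equiv> \<chi> i j. if i = j then sqrt (\<Sigma>$i$j) else 0"
  shows "S ** S = \<Sigma>"
proof -
  have "(S ** S) $ i $ j = \<Sigma> $ i $ j" for i j
  proof -
    have "(S ** S) $ i $ j = (\<Sum>k\<in>UNIV.
        (if i = k then sqrt (\<Sigma>$i$k) else 0) * (if k = j then sqrt (\<Sigma>$k$j) else 0))"
      by (simp add: matrix_matrix_mult_def S_def)
    also have "\<dots> = (\<Sum>k\<in>UNIV. if k = i then (if i = j then sqrt (\<Sigma>$i$i) * sqrt (\<Sigma>$i$i) else 0) else 0)"
      by (rule sum.cong) auto
    also have "\<dots> = \<Sigma> $ i $ j" using assms by auto
    finally show ?thesis .
  qed
  then show ?thesis by (simp add: vec_eq_iff)
qed

lemma orthogonal_conj_sqrt: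
  fixes U \<Sigma> :: "real^'n^'n"
  assumes "orthogonal_matrix U"
    and "\<forall>i j. i \<noteq> j \<longrightarrow> \<Sigma>$i$j = 0" and "\<forall>i. \<Sigma>$i$i \<ge> 0"
  defines "V \<equiv> U ** (\<chi> i j. if i = j then sqrt (\<Sigma>$i$j) else 0) ** transpose U"
  shows "transpose V = V" and "V ** V = U ** \<Sigma> ** transpose U"
proof -
  define S :: "real^'n^'n" where "S = (\<chi> i j. if i = j then sqrt (\<Sigma>$i$j) else 0)"
  have "transpose S = S" by (simp add: S_def transpose_def vec_eq_iff)
  then show "transpose V = V"
    by (simp add: V_def S_def[symmetric] matrix_transpose_mul matrix_mul_assoc)
  have "V ** V = U ** S ** (transpose U ** U) ** S ** transpose U"
    by (simp add: V_def S_def[symmetric] matrix_mul_assoc)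
  also have "\<dots> = U ** (S ** S) ** transpose U"
    using assms(1) by (simp add: orthogonal_matrix matrix_mul_assoc)
  finally show "V ** V = U ** \<Sigma> ** transpose U"
    using sqrt_diag_mul_self[OF assms(2,3)] by (simp add: S_def)
qed

lemma symmetric_kernel_of_square:
  fixes V :: "real^'n^'n"
  assumes "transpose V = V" and "V *v (V *v z) = 0"
  shows "V *v z = 0"
proof -
  have "(V *v z) \<bullet> (V *v z) = z \<bullet> (V *v (V *v z))"
    by (metis assms(1) dot_lmul_matrix transpose_matrix_vector)
  then show ?thesis using assms(2) by simp
qed

text \<open>The entries of a fixed vector average to themselves under a positive power of \<open>A\<^sup>T\<close>, so a
  maximal entry forces all entries to equal it.\<close>

lemma primitive_stochastic_fixed_vector_const:
  fixes A :: "real^'n^'n"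
  assumes prim: "primitive_matrix A" and ls: "left_stochastic A"
    and fixed: "transpose A *v x = x"
  shows "x $ i = x $ j"
proof -
  have powers: "transpose (mat_pow A k) *v x = x \<and> transpose (mat_pow A k) *v (\<chi> i. 1) = (\<chi> i. 1)" for k
  proof (induction k)
    case 0 then show ?case by (simp add: mat_pow_def)
  next
    case (Suc k)
    have "mat_pow A (Suc k) = A ** mat_pow A k" by (simp add: mat_pow_def)
    then show ?case using Suc fixed ls
      by (simp add: matrix_transpose_mul matrix_vector_mul_assoc[symmetric] left_stochastic_def)
  qed
  obtain k where k: "\<forall>i j. mat_pow A k $i$j > 0" using prim primitive_matrix_def by blast
  define C where "C = transpose (mat_pow A k)"
  have C_pos: "C$i$j > 0" for i j using k by (simp add: C_def transpose_def)
  have Cx: "C *v x = x" and C1: "C *v (\<chi> i. 1) = (\<chi> i. 1)" using powers[of k] by (auto simp: C_def)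
  define m where "m = Max (range (\<lambda>i. x $ i))"
  have le_m: "x $ j \<le> m" for j unfolding m_def by (rule Max_ge) auto
  obtain i0 where i0: "x $ i0 = m"
  proof -
    have "m \<in> range (\<lambda>i. x $ i)" unfolding m_def by (rule Max_in) auto
    then show ?thesis using that by auto
  qed
  have "(\<Sum>j\<in>UNIV. C$i0$j * x$j) = m" and "(\<Sum>j\<in>UNIV. C$i0$j) = 1"
    using arg_cong[OF Cx, of "\<lambda>v. v $ i0"] arg_cong[OF C1, of "\<lambda>v. v $ i0"] i0
    by (simp_all add: matrix_vector_mult_def)
  then have "(\<Sum>j\<in>UNIV. C$i0$j * (m - x$j)) = 0"
    by (simp add: right_diff_distrib sum_subtractf sum_distrib_right[symmetric])
  moreover have "\<forall>j\<in>UNIV. C$i0$j * (m - x$j) \<ge> 0"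
    using C_pos le_m by (simp add: less_imp_le)
  ultimately have "C$i0$j * (m - x$j) = 0" for j
    by (simp add: sum_nonneg_eq_0_iff)
  then have "x$j = m" for j using C_pos[of i0 j] by (metis less_irrefl mult_eq_0_iff eq_iff_diff_eq_0)
  then show ?thesis by simp
qed

context
  fixes A V :: "real^'n^'n" and p :: "real^'n"
  assumes p_pos: "\<forall>k. p$k > 0"
    and V_square: "V ** V = (1/2) *\<^sub>R (diag_mat p - A ** diag_mat p)"
begin

lemma square_root_apply_twice:
  "V *v (V *v z) = (1/2) *\<^sub>R (diag_mat p *v z - A *v (diag_mat p *v z))"
  by (simp add: matrix_vector_mul_assoc V_square scaleR_matrix_vector_assoc[symmetric]
      matrix_vector_mult_diff_rdistrib)

lemma square_root_kernel_const:
  assumes prim: "primitive_matrix A" and ls: "left_stochastic A"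
    and balanced: "diag_mat p ** transpose A = A ** diag_mat p"
    and kernel: "V *v x = 0"
  shows "x $ i = x $ j"
proof -
  have "diag_mat p *v x = A *v (diag_mat p *v x)"
    using square_root_apply_twice[of x] kernel by simp
  also have "\<dots> = diag_mat p *v (transpose A *v x)"
    by (simp only: matrix_vector_mul_assoc balanced)
  finally have "transpose A *v x = x"
    using p_pos by (simp add: diag_mat_mult_vector vec_eq_iff) (metis less_irrefl)
  then show ?thesis by (rule primitive_stochastic_fixed_vector_const[OF prim ls])
qed

lemma square_root_kills_ones:
  assumes "transpose V = V" and "A *v p = p"
  shows "V *v (\<chi> i. 1) = 0"
proof (rule symmetric_kernel_of_square[OF assms(1)])
  have "diag_mat p *v (\<chi> i. 1) = p" by (simp add: diag_mat_mult_vector vec_eq_iff)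
  then show "V *v (V *v (\<chi> i. 1)) = 0"
    using assms(2) square_root_apply_twice[of "\<chi> i. 1"] by simp
qed

lemma optimality_condition_orthogonal_perron:
  assumes "transpose V = V" and perron: "A *v p = p"
    and opt: "\<And>l. (transpose ((1/2) *\<^sub>R (mat 1 + A)) *v g)$l + (1 / p$l) * (V *v y)$l = 0"
  shows "g \<bullet> p = 0"
proof -
  define Ab where "Ab = (1/2) *\<^sub>R (mat 1 + A)"
  have "p$l * (transpose Ab *v g)$l + (V *v y)$l = 0" for l
  proof -
    have "p$l * (transpose Ab *v g)$l + (V *v y)$l
        = p$l * ((transpose Ab *v g)$l + (1 / p$l) * (V *v y)$l)"
      using p_pos[rule_format, of l] by (simp add: algebra_simps)
    then show ?thesis using opt[of l] by (simp add: Ab_def)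
  qed
  then have "p \<bullet> (transpose Ab *v g) + (\<chi> i. 1) \<bullet> (V *v y) = 0"
    by (simp add: inner_vec_def sum.distrib[symmetric])
  moreover have "Ab *v p = p"
    using perron by (simp add: Ab_def scaleR_matrix_vector_assoc[symmetric] matrix_vector_mult_add_rdistrib)
  then have "p \<bullet> (transpose Ab *v g) = g \<bullet> p"
    by (metis dot_lmul_matrix inner_commute transpose_matrix_vector)
  moreover have "(\<chi> i. 1) \<bullet> (V *v y) = 0"
    by (metis square_root_kills_ones[OF assms(1,2)] assms(1) dot_lmul_matrix
        transpose_matrix_vector inner_zero_left)
  ultimately show ?thesis by simp
qed

end

theorem lemma2:
  fixes A :: "real^'n^'n"
    and p q \<mu> :: "real^'n"
    and \<beta> :: real
    and J :: "'n \<Rightarrow> real^'m \<Rightarrow> real"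
    and gradJ :: "'n \<Rightarrow> real^'m \<Rightarrow> real^'m"
    and wstar :: "real^'m"
    and U \<Sigma> :: "real^'n^'n"
    and W Y :: "'n \<Rightarrow> real^'m"
  assumes N2: "CARD('n) \<ge> 2"
    and q_pos: "\<forall>k. q$k > 0"
    and J_convex: "\<forall>k. convex_on UNIV (J k)"
    and J_grad: "\<forall>k w. (J k has_derivative (\<lambda>h. gradJ k w \<bullet> h)) (at w)"
    and F_sc: "strongly_convex_on UNIV (\<lambda>w. \<Sum>k\<in>UNIV. q$k * J k w)"
    and wstar_min: "\<forall>w. (\<Sum>k\<in>UNIV. q$k * J k wstar) \<le> (\<Sum>k\<in>UNIV. q$k * J k w)"
    and wstar_unique: "\<forall>w. (\<forall>v. (\<Sum>k\<in>UNIV. q$k * J k w) \<le> (\<Sum>k\<in>UNIV. q$k * J k v)) \<longrightarrow> w = wstar"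
    and A_prim: "primitive_matrix A"
    and A_ls: "left_stochastic A"
    and p_perron: "A *v p = p" "sum (\<lambda>k. p$k) UNIV = 1" "\<forall>k. p$k > 0"
    and A_bal: "diag_mat p ** transpose A = A ** diag_mat p"
    and mu_pos: "\<forall>k. \<mu>$k > 0"
    and beta_pos: "\<beta> > 0"
    and q_eq: "\<forall>k. q$k = \<beta> * \<mu>$k * p$k"
    and U_orth: "orthogonal_matrix U"
    and Sigma_diag: "\<forall>i j. i \<noteq> j \<longrightarrow> \<Sigma>$i$j = 0"
    and Sigma_nonneg: "\<forall>i. \<Sigma>$i$i \<ge> 0"
    and eig: "(1/2) *\<^sub>R (diag_mat p - A ** diag_mat p) = U ** \<Sigma> ** transpose U"
    and eq1: "\<forall>l. kron_I (transpose ((1/2) *\<^sub>R (mat 1 + A))) (\<lambda>k. \<mu>$k *\<^sub>R gradJ k (W k)) l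
                 + (1 / p$l) *\<^sub>R kron_I (U ** (\<chi> i j. if i = j then sqrt (\<Sigma>$i$j) else 0) ** transpose U) Y l = 0"
    and eq2: "\<forall>l. kron_I (U ** (\<chi> i j. if i = j then sqrt (\<Sigma>$i$j) else 0) ** transpose U) W l = 0"
  shows "\<forall>k. W k = wstar"
proof -
  define V where "V = U ** (\<chi> i j. if i = j then sqrt (\<Sigma>$i$j) else 0) ** transpose U"
  have V_sym: "transpose V = V" and V_square: "V ** V = (1/2) *\<^sub>R (diag_mat p - A ** diag_mat p)"
    using orthogonal_conj_sqrt[OF U_orth Sigma_diag Sigma_nonneg] eig by (simp_all add: V_def)
  note square_root = p_perron(3) V_square
  have "V *v (\<chi> k. W k $ r) = 0" for r
    using eq2 by (simp add: vec_eq_iff kron_I_component V_def)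
  then have "W k $ r = W l $ r" for k l r
    using square_root_kernel_const[OF square_root A_prim A_ls A_bal] by (metis vec_lambda_beta)
  then obtain c where W_const: "\<And>k. W k = c" by (metis vec_eq_iff)
  have "(\<chi> k. \<mu>$k * gradJ k c $ r) \<bullet> p = 0" for r
  proof (rule optimality_condition_orthogonal_perron[OF square_root V_sym p_perron(1)])
    show "(transpose ((1/2) *\<^sub>R (mat 1 + A)) *v (\<chi> k. \<mu>$k * gradJ k c $ r))$l
        + (1 / p$l) * (V *v (\<chi> k. Y k $ r))$l = 0" for l
      using arg_cong[OF spec[OF eq1, of l], of "\<lambda>v. v $ r"]
      by (simp add: kron_I_component V_def W_const)
  qed
  then have "(\<Sum>k\<in>UNIV. q$k *\<^sub>R gradJ k c) = 0"
    by (simp add: vec_eq_iff inner_vec_def sum_component q_eq sum_distrib_left[symmetric] mult_ac)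
  then have "(\<Sum>k\<in>UNIV. q$k * J k c) \<le> (\<Sum>k\<in>UNIV. q$k * J k v)" for v
    using q_pos J_convex J_grad
    by (intro convex_sum_stationary_imp_minimum) (auto simp: less_imp_le)
  then show ?thesis using wstar_unique W_const by blast
qed

end
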